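(* Let $d>0$ and $y_1>0$, and let $S$ be a finite set of points in $\{(x,y):x\ge d\}$ with at least one point on the line $\mathcal{L}'=\{x=d\}$. Define $x^*<0$ as follows: if $S$ has no point $(d,y)$ with $y>y_1$, let $x^*$ be an arbitrary negative number; otherwise let $y_3=\max\{y:(d,y)\in S,\ y>y_1\}$ and $x^*=-\frac{1}{2}\,d\,\frac{y_1}{y_3-y_1}$. Then for every $x\in[x^*,0)$, every $y_1'\ge y_1$ and every $q\in S\cap\mathcal{L}'$: the closed segment from $q$ to $(x,0)$ contains no point of $(S\setminus\{q\})\cup\{(0,y_1')\}$, and the closed segment from $q$ to $(0,y_1')$ contains no point of $(S\setminus\{q\})\cup\{(x,0)\}$. (Interpretation: a robot starting at the origin and moving left horizontally to $(x^*,0)$, while another robot at $(0,y_1)$ stays put or moves upward along the $Y$-axis, never obstructs or is obstructed from the robots on the leftmost line $\mathcal{L}'$ of the remaining robots $S$.)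
   Context: All coordinates are in a fixed Cartesian coordinate system of the plane; "segment" means closed line segment. *)

theory Defs
  imports "HOL-Analysis.Analysis"
begin

definition vline :: "real \<Rightarrow> (real \<times> real) set" where
  "vline d = {p. fst p = d}"

definition admissible_xstar :: "real \<Rightarrow> real \<Rightarrow> (real \<times> real) set \<Rightarrow> real \<Rightarrow> bool" where
  "admissible_xstar d y1 S xs \<longleftrightarrow>
     xs < 0 \<and>
     (if {y. (d, y) \<in> S \<and> y > y1} = {} then True
      else xs = - (1/2) * d * (y1 / (Max {y. (d, y) \<in> S \<and> y > y1} - y1)))"

end

theory Submission
  imports Defs
begin

text \<open>A segment from a point q on the line x = d to a point strictly left of that line
  meets the half-plane x \<ge> d only in q, so no other robot of S can lie on it; and a segment
  from q to a point with x \<ge> 0 never reaches (x, 0) with x < 0.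
  It remains that the segment from q = (d, yq) to (x, 0) crosses the Y-axis below y1.
  That crossing has height yq (-x) / (d - x), which is less than y1 exactly when
  (yq - y1) (-x) < y1 d. This is trivial for yq \<le> y1, and for yq > y1 the choice of x*
  gives (yq - y1) (-x) \<le> (y3 - y1) (-x*) = y1 d / 2.\<close>

lemma closed_segment_halfspace_ge_start:
  fixes a b p v :: "'a::real_inner"
  assumes "v \<bullet> b < v \<bullet> a" and "p \<in> closed_segment a b" and "v \<bullet> a \<le> v \<bullet> p"
  shows "p = a"
proof -
  obtain u where u: "0 \<le> u" "u \<le> 1" and p: "p = (1 - u) *\<^sub>R a + u *\<^sub>R b"
    using assms(2) by (auto simp: in_segment)
  have "v \<bullet> p = v \<bullet> a + u * (v \<bullet> b - v \<bullet> a)"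
    by (simp add: p inner_add_right algebra_simps)
  with assms(1,3) u have "u = 0"
    by (smt (verit) mult_pos_neg)
  then show ?thesis by (simp add: p)
qed

lemma closed_segment_fst_ge_min:
  fixes a b p :: "real \<times> real"
  assumes "p \<in> closed_segment a b"
  shows "min (fst a) (fst b) \<le> fst p"
proof -
  have "fst p \<in> closed_segment (fst a) (fst b)"
    using assms by (simp add: closed_segment_linear_image linear_fst)
  then show ?thesis by (auto simp: closed_segment_eq_real_ivl split: if_splits)
qed

lemma closed_segment_y_axis_crossing:
  fixes d x y yq :: real
  assumes "(0, y) \<in> closed_segment (d, yq) (x, 0)"
  shows "y * (d - x) = yq * (- x)"
proof -
  obtain u where "(1 - u) * d + u * x = 0" and "y = (1 - u) * yq"
    using assms by (auto simp: in_segment)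
  then show ?thesis by algebra
qed

lemma admissible_xstar_bound:
  fixes d y1 xs x yq :: real
  assumes "d > 0" "y1 > 0" "finite S" "admissible_xstar d y1 S xs"
    and "xs \<le> x" "x < 0" "(d, yq) \<in> S"
  shows "(yq - y1) * (- x) < y1 * d"
proof (cases "yq \<le> y1")
  case True
  then have "(yq - y1) * (- x) \<le> 0"
    using assms(6) by (simp add: mult_nonpos_nonpos)
  with assms(1,2) show ?thesis by (smt (verit) mult_pos_pos)
next
  case False
  define A where "A = {y. (d, y) \<in> S \<and> y > y1}"
  have "yq \<in> A" using False assms(7) by (simp add: A_def)
  have "A \<subseteq> snd ` S" by (force simp: A_def)
  then have "finite A" using assms(3) finite_subset by blast
  then have "yq \<le> Max A" "Max A \<in> A" using \<open>yq \<in> A\<close> by (auto intro: Max_in)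
  then have "Max A > y1" by (simp add: A_def)
  have "A \<noteq> {}" using \<open>yq \<in> A\<close> by auto
  then have xs: "xs = - (1/2) * d * (y1 / (Max A - y1))"
    using assms(4) by (simp add: admissible_xstar_def A_def)
  have "(yq - y1) * (- x) \<le> (Max A - y1) * (- xs)"
    using \<open>yq \<le> Max A\<close> False assms(5,6) by (intro mult_mono) auto
  also have "\<dots> = y1 * d / 2"
    using \<open>Max A > y1\<close> by (simp add: xs field_simps)
  also have "\<dots> < y1 * d"
    using assms(1,2) by simp
  finally show ?thesis .
qed

theorem mainTheorem6:
  fixes d y1 xs :: real and S :: "(real \<times> real) set"
  assumes "d > 0" and "y1 > 0"
    and "finite S" and "S \<subseteq> {p. fst p \<ge> d}"
    and "S \<inter> vline d \<noteq> {}"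
    and "admissible_xstar d y1 S xs"
  shows "\<forall>x y1' q. xs \<le> x \<and> x < 0 \<and> y1 \<le> y1' \<and> q \<in> S \<inter> vline d \<longrightarrow>
           closed_segment q (x, 0) \<inter> ((S - {q}) \<union> {(0, y1')}) = {} \<and>
           closed_segment q (0, y1') \<inter> ((S - {q}) \<union> {(x, 0)}) = {}"
proof (intro allI impI)
  fix x y1' q
  assume "xs \<le> x \<and> x < 0 \<and> y1 \<le> y1' \<and> q \<in> S \<inter> vline d"
  then obtain yq where x: "xs \<le> x" "x < 0" and "y1 \<le> y1'" and q: "q = (d, yq)" "q \<in> S"
    by (cases q) (auto simp: vline_def)
  have fst_inner: "(1, 0) \<bullet> z = fst z" for z :: "real \<times> real"
    by (cases z) (simp add: inner_Pair)
  have only_q: "p = q" if "p \<in> S" "p \<in> closed_segment q b" "fst b < d" for p b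
    using closed_segment_halfspace_ge_start[of "(1, 0)" b q p] that assms(4) q
    by (auto simp: fst_inner)
  have "(0, y1') \<notin> closed_segment q (x, 0)"
  proof
    assume "(0, y1') \<in> closed_segment q (x, 0)"
    then have "y1' * (d - x) = yq * (- x)"
      using q closed_segment_y_axis_crossing by blast
    also have "\<dots> < y1 * (d - x)"
      using admissible_xstar_bound[OF assms(1-3,6) x, of yq] q by (simp add: algebra_simps)
    finally show False
      using \<open>y1 \<le> y1'\<close> assms(1) x(2) by (smt (verit) mult_right_mono)
  qed
  moreover have "(x, 0) \<notin> closed_segment q (0, y1')"
    using closed_segment_fst_ge_min[of "(x, 0)" q "(0, y1')"] q assms(1) x(2) by auto
  ultimately show "closed_segment q (x, 0) \<inter> ((S - {q}) \<union> {(0, y1')}) = {} \<and>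
      closed_segment q (0, y1') \<inter> ((S - {q}) \<union> {(x, 0)}) = {}"
    using only_q[of _ "(x, 0)"] only_q[of _ "(0, y1')"] assms(1) x(2) by auto
qed

end
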